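(* Let $\zeta=(m+r+\ell)/(m+r)$ be the money multiplier. (i) In an ample-reserves equilibrium, if aggregate cash $m$ is sufficiently small (holding the other equilibrium quantities and their derivatives fixed), then $\partial\zeta/\partial i>0$ and $\partial\zeta/\partial i_r<0$. (ii) Suppose $L^{-1}(i_\ell)>\bar\delta$. In both ample-reserves and scarce-reserves equilibria, if $m>0$ and $\chi<1$, then $\partial\zeta/\partial\bar\delta<0$.
   Context: Buyers meet sellers in one of three meeting types with probabilities $\sigma_1,\sigma_2,\sigma_3>0$ ($\sum\sigma_j=1$); type-1 buyers can only use cash, type-2 buyers can use cash, deposits and bank notes, type-3 buyers can additionally use unsecured credit up to a limit $\bar\delta\ge0$. DM preferences $u,c$ with $u'>0,u''<0$, $c'>0,c''\ge0$, $u(0)=c(0)=0$, $q^*$ solving $u'(q^* )=c'(q^* )$; bargaining power $\theta\in(0,1]$, payment $v(q)=(1-\theta)u(q)+\theta c(q)$, liquidity premium $\lambda(q)=\theta[u'(q)-c'(q)]/[(1-\theta)u'(q)+\theta c'(q)]$ for $q<q^*$ and $0$ otherwise, $L(z)=\lambda(\min\{q^*,v^{-1}(z)\})$ with decreasing inverse $L^{-1}$. Policy: nominal rate $i\ge0$, interest on reserves $i_r$, reserve requirement $\chi\in(0,1)$, $a=(1-\chi)/\chi$. Bank cost functions $\gamma,\eta$ twice differentiable with $\gamma',\gamma'',\eta',\eta''>0$ on $(0,\infty)$, $\gamma(0)=\gamma'(0)=\eta(0)=\eta'(0)=0$; entry cost $k>0$; $1+i=(1+i_d)(1+i_\ell)$.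 There is a measure $n$ of identical banks each holding reserves $\tilde r$ and lending $\tilde\ell$; aggregate reserves $r=n\tilde r$, aggregate loans (bank notes) $\ell=n\tilde\ell$; aggregate cash $m=\sum_j\sigma_jm_j$ is held only by type-1 buyers in banking equilibria, $m=\sigma_1L^{-1}(i)$ (decreasing in $i$). Ample-reserves equilibrium: $(\tilde r,\tilde\ell)$ solve $[1+\eta'(\tilde\ell)][1+i_r-\gamma'(\tilde r)]=1+i$ and $\gamma'(\tilde r)\tilde r-\gamma(\tilde r)+\eta'(\tilde\ell)\tilde\ell-\eta(\tilde\ell)=k$, $i_d=i_r-\gamma'(\tilde r)$, $i_\ell=\eta'(\tilde\ell)$, $\tilde\ell<a\tilde r$; $n$ solves $(\sigma_2+\sigma_3)L^{-1}(i_\ell)-\sigma_3\bar\delta=n[(1+i_d)\tilde r+\tilde\ell]$. Scarce-reserves equilibrium: $\tilde\ell=a\tilde r$ (so $\ell=ar$ and $\zeta=(m+r/\chi)/(m+r)$), $(\tilde r,i_d)$ solve $\gamma'(\tilde r)\tilde r-\gamma(\tilde r)+\eta'(a\tilde r)a\tilde r-\eta(a\tilde r)=k$ and $i_d=i_r-\gamma'(\tilde r)+[i_\ell-\eta'(a\tilde r)]a$, and $r=\frac{(\sigma_2+\sigma_3)\chi}{1+i_d\chi}L^{-1}(i_\ell)-\frac{\sigma_3\bar\delta\chi}{1+i_d\chi}$. *)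

theory Defs
  imports Complex_Main
begin

definition money_multiplier :: "real \<Rightarrow> real \<Rightarrow> real \<Rightarrow> real" where
  "money_multiplier m r l = (m + r + l) / (m + r)"

definition acoef :: "real \<Rightarrow> real" where
  "acoef \<chi> = (1 - \<chi>) / \<chi>"

text \<open>Measure of banks in an ample-reserves equilibrium, solving
  (sigma2+sigma3) Linv(i_l) - sigma3 dbar = n ((1+i_d) rt + lt),
  with i_d = i_r - gamma'(rt), i_l = eta'(lt).\<close>
definition ample_nbanks ::
  "(real \<Rightarrow> real) \<Rightarrow> real \<Rightarrow> real \<Rightarrow> real \<Rightarrow> (real \<Rightarrow> real) \<Rightarrow> (real \<Rightarrow> real)
   \<Rightarrow> real \<Rightarrow> real \<Rightarrow> real \<Rightarrow> real" where
  "ample_nbanks Linv \<sigma>\<^sub>2 \<sigma>\<^sub>3 \<delta> g' e' ir rt lt =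
     ((\<sigma>\<^sub>2 + \<sigma>\<^sub>3) * Linv (e' lt) - \<sigma>\<^sub>3 * \<delta>) / ((1 + (ir - g' rt)) * rt + lt)"

text \<open>Ample-reserves equilibrium at policy (i, i_r) and credit limit dbar:
  individual bank reserves rt and loans lt (both positive), the two bank
  conditions, the non-binding reserve requirement lt < a rt, and a positive
  measure of banks n.\<close>
definition ample_eq ::
  "(real \<Rightarrow> real) \<Rightarrow> real \<Rightarrow> real \<Rightarrow> real \<Rightarrow>
   (real \<Rightarrow> real) \<Rightarrow> (real \<Rightarrow> real) \<Rightarrow> (real \<Rightarrow> real) \<Rightarrow> (real \<Rightarrow> real) \<Rightarrow>
   real \<Rightarrow> real \<Rightarrow> real \<Rightarrow> real \<Rightarrow> real \<Rightarrow> real \<Rightarrow> bool" where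
  "ample_eq Linv \<sigma>\<^sub>2 \<sigma>\<^sub>3 \<delta> g g' e e' k \<chi> i ir rt lt \<longleftrightarrow>
     0 < rt \<and> 0 < lt \<and>
     (1 + e' lt) * (1 + ir - g' rt) = 1 + i \<and>
     g' rt * rt - g rt + e' lt * lt - e lt = k \<and>
     lt < acoef \<chi> * rt \<and>
     0 < ample_nbanks Linv \<sigma>\<^sub>2 \<sigma>\<^sub>3 \<delta> g' e' ir rt lt"

text \<open>Scarce-reserves equilibrium (bank side) at policy (i, i_r): lt = a rt,
  zero profit, the deposit-rate condition, 1+i = (1+i_d)(1+i_l), and the
  (binding) reserve requirement multiplier i_l - eta'(a rt) is nonnegative.\<close>
definition scarce_eq ::
  "(real \<Rightarrow> real) \<Rightarrow> (real \<Rightarrow> real) \<Rightarrow> (real \<Rightarrow> real) \<Rightarrow> (real \<Rightarrow> real) \<Rightarrow>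
   real \<Rightarrow> real \<Rightarrow> real \<Rightarrow> real \<Rightarrow> real \<Rightarrow> real \<Rightarrow> real \<Rightarrow> bool" where
  "scarce_eq g g' e e' k \<chi> i ir rt idr il \<longleftrightarrow>
     0 < rt \<and>
     g' rt * rt - g rt + e' (acoef \<chi> * rt) * (acoef \<chi> * rt) - e (acoef \<chi> * rt) = k \<and>
     idr = ir - g' rt + (il - e' (acoef \<chi> * rt)) * acoef \<chi> \<and>
     1 + i = (1 + idr) * (1 + il) \<and>
     e' (acoef \<chi> * rt) \<le> il"

definition scarce_reserves ::
  "(real \<Rightarrow> real) \<Rightarrow> real \<Rightarrow> real \<Rightarrow> real \<Rightarrow> real \<Rightarrow> real \<Rightarrow> real \<Rightarrow> real" where
  "scarce_reserves Linv \<sigma>\<^sub>2 \<sigma>\<^sub>3 \<delta> \<chi> idr il =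
     (\<sigma>\<^sub>2 + \<sigma>\<^sub>3) * \<chi> / (1 + idr * \<chi>) * Linv il - \<sigma>\<^sub>3 * \<delta> * \<chi> / (1 + idr * \<chi>)"

end

(* At zero cash the money multiplier is 1 + lt/rt, the loan-reserve ratio of a single bank.
   Differentiating the two bank conditions (deposit-rate condition and zero profit) gives a
   2x2 linear system whose solution moves lt and rt in opposite directions: up and down for
   the policy rate i, down and up for the interest on reserves i_r. These signs of the
   derivative of lt/rt persist for small positive cash. The credit limit does not enter the
   bank conditions at all, so it leaves lt/rt unchanged and only shrinks the scale of banking
   (the measure of banks, resp. aggregate reserves); with positive cash held outside banks,
   zeta = (m + R + L)/(m + R) falls when R and L shrink proportionally. *)

theory Submission
  imports Defs
begin

lemma DERIV_at_if_DERIV_within_nonneg: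
  assumes "(f has_real_derivative D) (at x within {0..})" "0 < x"
  shows "(f has_real_derivative D) (at x)"
proof -
  have "(f has_real_derivative D) (at x within {0<..})"
    using assms(1) by (rule has_field_derivative_subset) auto
  then show ?thesis
    using at_within_open[of x "{0<..}"] assms(2) by simp
qed

lemma DERIV_zero_if_eventually_const:
  assumes "(f has_real_derivative D) (at x)" "eventually (\<lambda>y. f y = c) (nhds x)"
  shows "D = 0"
proof -
  have "((\<lambda>_. c) has_real_derivative D) (at x)"
    using DERIV_cong_ev[OF refl assms(2) refl] assms(1) by simp
  then show ?thesis
    using DERIV_const DERIV_unique by blast
qed

lemma DERIV_nonpos_if_strict_antimono:
  fixes f :: "real \<Rightarrow> real"
  assumes "\<forall>x y. 0 \<le> x \<longrightarrow> x < y \<longrightarrow> f y < f x" "0 \<le> x" "(f has_real_derivative D) (at x)"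
  shows "D \<le> 0"
proof (rule ccontr)
  assume "\<not> D \<le> 0"
  then obtain d where "0 < d" "\<forall>h>0. h < d \<longrightarrow> f x < f (x + h)"
    using DERIV_pos_inc_right[OF assms(3)] by auto
  then have "f x < f (x + d / 2)"
    by simp
  moreover have "f (x + d / 2) < f x"
    using assms(1,2) \<open>0 < d\<close> by simp
  ultimately show False
    by simp
qed

lemma eventually_nhds_slices:
  fixes U :: "('a::topological_space \<times> 'b::topological_space) set"
  assumes "open U" "(a, b) \<in> U"
  shows "eventually (\<lambda>x. (x, b) \<in> U) (nhds a)" "eventually (\<lambda>y. (a, y) \<in> U) (nhds b)"
proof -
  have "((\<lambda>x. (x, b)) \<longlongrightarrow> (a, b)) (nhds a)" "((\<lambda>y. (a, y)) \<longlongrightarrow> (a, b)) (nhds b)"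
    by (intro tendsto_Pair filterlim_ident tendsto_const)+
  then show "eventually (\<lambda>x. (x, b) \<in> U) (nhds a)" "eventually (\<lambda>y. (a, y) \<in> U) (nhds b)"
    using topological_tendstoD assms by blast+
qed

lemma DERIV_money_multiplier:
  assumes "(M has_real_derivative M') (at x)" "(R has_real_derivative R') (at x)"
    and "(L has_real_derivative L') (at x)" "M x + R x \<noteq> 0"
  shows "((\<lambda>y. money_multiplier (M y) (R y) (L y)) has_real_derivative
      (L' * (M x + R x) - L x * (M' + R')) / (M x + R x)\<^sup>2) (at x)"
  unfolding money_multiplier_def using assms
  by (auto intro!: derivative_eq_intros simp: power2_eq_square algebra_simps)

lemma money_multiplier_deriv_sgn_small_cash:
  assumes "(M has_real_derivative M') (at x)" "(R has_real_derivative R') (at x)"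
    and "(L has_real_derivative L') (at x)" "M x = 0" "0 < R x"
    and "L' * R x - L x * (M' + R') \<noteq> 0"
  shows "\<exists>\<epsilon>>0. \<forall>m. 0 < m \<and> m < \<epsilon> \<longrightarrow>
    (\<exists>D. ((\<lambda>y. money_multiplier (m + M y) (R y) (L y)) has_real_derivative D) (at x) \<and>
         sgn D = sgn (L' * R x - L x * (M' + R')))"
proof -
  define P where "P = L' * R x - L x * (M' + R')"
  have "0 < \<bar>P\<bar> / (\<bar>L'\<bar> + 1)"
    using assms(6) by (simp add: P_def)
  moreover have "\<exists>D. ((\<lambda>y. money_multiplier (m + M y) (R y) (L y)) has_real_derivative D) (at x) \<and>
      sgn D = sgn P" if m: "0 < m" "m < \<bar>P\<bar> / (\<bar>L'\<bar> + 1)" for m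
  proof -
    have denom: "0 < m + M x + R x"
      using m assms(4,5) by simp
    have "\<bar>m * L'\<bar> < \<bar>P\<bar>"
    proof -
      have "\<bar>m * L'\<bar> \<le> m * (\<bar>L'\<bar> + 1) - m"
        using m(1) by (simp add: abs_mult algebra_simps)
      also have "\<dots> < \<bar>P\<bar>"
        using m by (simp add: field_simps)
      finally show ?thesis .
    qed
    \<comment> \<open>the cash term only perturbs the numerator by m L', which cannot flip the sign of P\<close>
    then have "sgn (m * L' + P) = sgn P"
      by (auto simp: sgn_if abs_if split: if_splits)
    moreover have numerator: "L' * (m + M x + R x) - L x * ((0 + M') + R') = m * L' + P"
      using assms(4) by (simp add: P_def algebra_simps)
    have "((\<lambda>y. money_multiplier (m + M y) (R y) (L y)) has_real_derivative
        (m * L' + P) / (m + M x + R x)\<^sup>2) (at x)"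
      using DERIV_money_multiplier[OF DERIV_add[OF DERIV_const[of m] assms(1)] assms(2,3),
          unfolded numerator] denom by simp
    ultimately show ?thesis
      using denom by (intro exI[of _ "(m * L' + P) / (m + M x + R x)\<^sup>2"]) simp
  qed
  ultimately show ?thesis
    unfolding P_def by blast
qed

lemma money_multiplier_deriv_neg_of_scale:
  assumes "(N has_real_derivative N') (at x)" "N' < 0"
    and "(r has_real_derivative 0) (at x)" "(l has_real_derivative 0) (at x)"
    and "0 < m" "0 \<le> N x * r x" "0 < l x"
  shows "\<exists>D. ((\<lambda>y. money_multiplier m (N y * r y) (N y * l y)) has_real_derivative D) (at x) \<and> D < 0"
proof -
  have numerator: "(N' * l x + 0 * N x) * (m + N x * r x) - N x * l x * (0 + (N' * r x + 0 * N x))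
      = N' * l x * m"
    by (simp add: algebra_simps)
  have "((\<lambda>y. money_multiplier m (N y * r y) (N y * l y)) has_real_derivative
      N' * l x * m / (m + N x * r x)\<^sup>2) (at x)"
    using DERIV_money_multiplier[OF DERIV_const[of m] DERIV_mult[OF assms(1,3)] DERIV_mult[OF assms(1,4)],
        unfolded numerator] assms(5,6) by simp
  moreover have "N' * l x * m / (m + N x * r x)\<^sup>2 < 0"
    using assms(2,5-7) by (simp add: divide_neg_pos mult_neg_pos)
  ultimately show ?thesis
    by blast
qed

lemma bank_response_sgn:
  fixes c d G E r l r' l' I' R' :: real
  assumes pos: "0 < c" "0 < d" "0 < G" "0 < E" "0 < r" "0 < l"
    and deposit_rate: "E * l' * d + c * (R' - G * r') = I'"
    and zero_profit: "G * r' * r + E * l' * l = 0"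
  shows "sgn l' = sgn (I' - c * R')" "sgn r' = - sgn l'"
proof -
  have r': "r' = - (E * l / (G * r)) * l'"
    using zero_profit pos by (simp add: field_simps)
  have l': "(E * (d + c * l / r)) * l' = I' - c * R'"
    using deposit_rate pos unfolding r' by (simp add: field_simps)
  have sgn_scale: "sgn (a * l') = sgn l'" if "0 < a" for a
    using that by (simp add: sgn_mult)
  show "sgn l' = sgn (I' - c * R')" "sgn r' = - sgn l'"
    unfolding l'[symmetric] r' using pos
    by (simp_all only: sgn_scale mult_minus_left sgn_minus add_pos_pos mult_pos_pos divide_pos_pos)
qed

locale bank_costs =
  fixes g g' g'' e e' e'' :: "real \<Rightarrow> real"
  assumes g_deriv: "\<And>x. 0 < x \<Longrightarrow> (g has_real_derivative g' x) (at x)"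
    and g'_deriv: "\<And>x. 0 < x \<Longrightarrow> (g' has_real_derivative g'' x) (at x)"
    and e_deriv: "\<And>x. 0 < x \<Longrightarrow> (e has_real_derivative e' x) (at x)"
    and e'_deriv: "\<And>x. 0 < x \<Longrightarrow> (e' has_real_derivative e'' x) (at x)"
    and g_derivs_pos: "\<And>x. 0 < x \<Longrightarrow> 0 < g' x \<and> 0 < g'' x"
    and e_derivs_pos: "\<And>x. 0 < x \<Longrightarrow> 0 < e' x \<and> 0 < e'' x"
begin

lemma ample_eq_pos:
  assumes "ample_eq Linv s\<^sub>2 s\<^sub>3 \<delta> g g' e e' k \<chi> i ir rt lt" "0 \<le> i"
  shows "0 < rt" "0 < lt" "0 < 1 + ir - g' rt" "0 < (1 + (ir - g' rt)) * rt + lt"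
    and "0 < ample_nbanks Linv s\<^sub>2 s\<^sub>3 \<delta> g' e' ir rt lt"
proof -
  show rt: "0 < rt" and lt: "0 < lt" and "0 < ample_nbanks Linv s\<^sub>2 s\<^sub>3 \<delta> g' e' ir rt lt"
    using assms(1) unfolding ample_eq_def by simp_all
  have "0 < (1 + e' lt) * (1 + ir - g' rt)"
    using assms unfolding ample_eq_def by simp
  then show "0 < 1 + ir - g' rt"
    using e_derivs_pos[OF lt] by (simp add: zero_less_mult_iff)
  then show "0 < (1 + (ir - g' rt)) * rt + lt"
    using rt lt by (simp add: add_pos_pos)
qed

lemma ample_bank_response_sgn:
  assumes eq: "eventually (\<lambda>y. ample_eq Linv s\<^sub>2 s\<^sub>3 (\<delta> y) g g' e e' k \<chi> (I y) (IR y) (rt y) (lt y)) (nhds x)"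
    and I_nonneg: "0 \<le> I x"
    and derivs: "(rt has_real_derivative r') (at x)" "(lt has_real_derivative l') (at x)"
      "(I has_real_derivative I') (at x)" "(IR has_real_derivative IR') (at x)"
  shows "sgn l' = sgn (I' - (1 + e' (lt x)) * IR')" "sgn r' = - sgn l'"
proof -
  note pos = ample_eq_pos[OF eventually_nhds_x_imp_x[OF eq] I_nonneg]
  have "((\<lambda>y. (1 + e' (lt y)) * (1 + IR y - g' (rt y)) - I y) has_real_derivative
      e'' (lt x) * l' * (1 + IR x - g' (rt x)) + (1 + e' (lt x)) * (IR' - g'' (rt x) * r') - I') (at x)"
    using derivs pos
    by (auto intro!: derivative_eq_intros DERIV_chain2[OF g'_deriv] DERIV_chain2[OF e'_deriv]
        simp: algebra_simps)
  moreover have "eventually (\<lambda>y. (1 + e' (lt y)) * (1 + IR y - g' (rt y)) - I y = 1) (nhds x)"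
    using eq by (rule eventually_mono) (simp add: ample_eq_def)
  ultimately have deposit_rate:
    "e'' (lt x) * l' * (1 + IR x - g' (rt x)) + (1 + e' (lt x)) * (IR' - g'' (rt x) * r') = I'"
    by (auto dest: DERIV_zero_if_eventually_const)
  have "((\<lambda>y. g' (rt y) * rt y - g (rt y) + e' (lt y) * lt y - e (lt y)) has_real_derivative
      g'' (rt x) * r' * rt x + e'' (lt x) * l' * lt x) (at x)"
    using derivs pos
    by (auto intro!: derivative_eq_intros DERIV_chain2[OF g'_deriv] DERIV_chain2[OF e'_deriv]
        DERIV_chain2[OF g_deriv] DERIV_chain2[OF e_deriv] simp: algebra_simps)
  moreover have "eventually (\<lambda>y. g' (rt y) * rt y - g (rt y) + e' (lt y) * lt y - e (lt y) = k) (nhds x)"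
    using eq by (rule eventually_mono) (simp add: ample_eq_def)
  ultimately have zero_profit: "g'' (rt x) * r' * rt x + e'' (lt x) * l' * lt x = 0"
    by (rule DERIV_zero_if_eventually_const)
  show "sgn l' = sgn (I' - (1 + e' (lt x)) * IR')" "sgn r' = - sgn l'"
    using bank_response_sgn[OF _ _ _ _ _ _ deposit_rate zero_profit] pos g_derivs_pos e_derivs_pos
    by (simp_all add: add_pos_pos)
qed

lemma DERIV_ample_nbanks:
  assumes "(Linv has_real_derivative Ld) (at (e' (lt x)))"
    and "(rt has_real_derivative r') (at x)" "(lt has_real_derivative l') (at x)"
    and "(\<delta> has_real_derivative \<delta>') (at x)" "(ir has_real_derivative ir') (at x)"
    and "0 < rt x" "0 < lt x" "(1 + (ir x - g' (rt x))) * rt x + lt x \<noteq> 0"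
  shows "((\<lambda>y. ample_nbanks Linv s\<^sub>2 s\<^sub>3 (\<delta> y) g' e' (ir y) (rt y) (lt y)) has_real_derivative
     (((s\<^sub>2 + s\<^sub>3) * Ld * e'' (lt x) * l' - s\<^sub>3 * \<delta>') * ((1 + (ir x - g' (rt x))) * rt x + lt x)
      - ((s\<^sub>2 + s\<^sub>3) * Linv (e' (lt x)) - s\<^sub>3 * \<delta> x)
        * ((ir' - g'' (rt x) * r') * rt x + (1 + (ir x - g' (rt x))) * r' + l'))
     / ((1 + (ir x - g' (rt x))) * rt x + lt x)\<^sup>2) (at x)"
  unfolding ample_nbanks_def using assms
  by (auto intro!: derivative_eq_intros DERIV_chain2[OF g'_deriv] DERIV_chain2[OF e'_deriv]
      DERIV_chain2[where f = Linv] simp: power2_eq_square algebra_simps)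

lemma ample_multiplier_deriv_sgn_small_cash:
  fixes I IR M rt lt Linv :: "real \<Rightarrow> real" and x I' IR' \<delta> s\<^sub>2 s\<^sub>3 :: real
  defines "Q \<equiv> I' - (1 + e' (lt x)) * IR'"
    and "n \<equiv> \<lambda>y. ample_nbanks Linv s\<^sub>2 s\<^sub>3 \<delta> g' e' (IR y) (rt y) (lt y)"
  assumes eq: "eventually (\<lambda>y. ample_eq Linv s\<^sub>2 s\<^sub>3 \<delta> g g' e e' k \<chi> (I y) (IR y) (rt y) (lt y)) (nhds x)"
    and I_nonneg: "0 \<le> I x"
    and rt: "(rt has_real_derivative r') (at x)" and lt: "(lt has_real_derivative l') (at x)"
    and I: "(I has_real_derivative I') (at x)" and IR: "(IR has_real_derivative IR') (at x)"
    and M: "(M has_real_derivative M') (at x)" "M x = 0"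
    and Linv: "Linv differentiable (at (e' (lt x)))"
    and Q: "Q \<noteq> 0" "M' * Q \<le> 0"
  shows "\<exists>\<epsilon>>0. \<forall>m. 0 < m \<and> m < \<epsilon> \<longrightarrow>
    (\<exists>D. ((\<lambda>y. money_multiplier (m + M y) (n y * rt y) (n y * lt y)) has_real_derivative D) (at x) \<and>
         sgn D = sgn Q)"
proof -
  note pos = ample_eq_pos[OF eventually_nhds_x_imp_x[OF eq] I_nonneg]
  have n_pos: "0 < n x"
    using pos(5) unfolding n_def .
  have sgn_l': "sgn l' = sgn Q" and sgn_r': "sgn r' = - sgn Q"
    using ample_bank_response_sgn[where \<delta> = "\<lambda>_. \<delta>", OF eq I_nonneg rt lt I IR]
    unfolding Q_def by simp_all
  obtain Ld where "(Linv has_real_derivative Ld) (at (e' (lt x)))"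
    using Linv real_differentiable_def by blast
  then have "\<exists>n'. (n has_real_derivative n') (at x)"
    unfolding n_def
    using DERIV_ample_nbanks[where \<delta> = "\<lambda>_. \<delta>", OF _ rt lt DERIV_const IR pos(1,2)
        pos(4)[THEN less_imp_neq, symmetric]] by blast
  then obtain n' where n: "(n has_real_derivative n') (at x)"
    by blast
  \<comment> \<open>at zero cash the multiplier is 1 + lt/rt, whose derivative has the sign of l' rt - lt r'\<close>
  define P where "P = n x * n x * (l' * rt x - lt x * r') - n x * lt x * M'"
  have "0 < l' * Q" "r' * Q < 0"
    using sgn_l' sgn_r' Q(1) by (auto simp: sgn_if zero_less_mult_iff mult_less_0_iff split: if_splits)
  then have "0 < rt x * (l' * Q) - lt x * (r' * Q)"
    using pos(1,2) mult_pos_pos[of "rt x" "l' * Q"] mult_pos_neg[of "lt x" "r' * Q"] by linarith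
  then have "0 < n x * n x * (rt x * (l' * Q) - lt x * (r' * Q))"
    using n_pos by simp
  moreover have "n x * lt x * (M' * Q) \<le> 0"
    using pos(2) n_pos Q(2) by (simp add: mult_nonneg_nonpos)
  ultimately have "0 < n x * n x * (rt x * (l' * Q) - lt x * (r' * Q)) - n x * lt x * (M' * Q)"
    by linarith
  also have "\<dots> = P * Q"
    unfolding P_def by (simp add: algebra_simps)
  finally have sgn_P: "sgn P = sgn Q"
    by (auto simp: sgn_if zero_less_mult_iff)
  have P_eq: "(n' * lt x + l' * n x) * (n x * rt x) - n x * lt x * (M' + (n' * rt x + r' * n x)) = P"
    unfolding P_def by (simp add: algebra_simps)
  have "0 < n x * rt x" "P \<noteq> 0"
    using n_pos pos(1) sgn_P Q(1) by (auto simp: sgn_0_0)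
  then show ?thesis
    using money_multiplier_deriv_sgn_small_cash[OF M(1) DERIV_mult[OF n rt] DERIV_mult[OF n lt] M(2)]
    unfolding P_eq sgn_P by blast
qed

lemma ample_multiplier_deriv_neg_credit_limit:
  fixes rt lt Linv :: "real \<Rightarrow> real" and ir s\<^sub>2 s\<^sub>3 :: real
  defines "n \<equiv> \<lambda>\<delta>. ample_nbanks Linv s\<^sub>2 s\<^sub>3 \<delta> g' e' ir (rt \<delta>) (lt \<delta>)"
  assumes U: "open U" "\<delta>\<^sub>0 \<in> U" and i: "0 \<le> i"
    and eq: "\<forall>\<delta>\<in>U. ample_eq Linv s\<^sub>2 s\<^sub>3 \<delta> g g' e e' k \<chi> i ir (rt \<delta>) (lt \<delta>)"
    and diff: "rt differentiable (at \<delta>\<^sub>0)" "lt differentiable (at \<delta>\<^sub>0)"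
      "Linv differentiable (at (e' (lt \<delta>\<^sub>0)))"
    and m: "0 < m" and s\<^sub>3: "0 < s\<^sub>3"
  shows "\<exists>D. ((\<lambda>\<delta>. money_multiplier m (n \<delta> * rt \<delta>) (n \<delta> * lt \<delta>)) has_real_derivative D) (at \<delta>\<^sub>0) \<and> D < 0"
proof -
  have ev: "eventually (\<lambda>\<delta>. ample_eq Linv s\<^sub>2 s\<^sub>3 \<delta> g g' e e' k \<chi> i ir (rt \<delta>) (lt \<delta>)) (nhds \<delta>\<^sub>0)"
    unfolding eventually_nhds using U eq by blast
  note pos = ample_eq_pos[OF eventually_nhds_x_imp_x[OF ev] i]
  obtain r' l' Ld where rt: "(rt has_real_derivative r') (at \<delta>\<^sub>0)"
    and lt: "(lt has_real_derivative l') (at \<delta>\<^sub>0)" and Ld: "(Linv has_real_derivative Ld) (at (e' (lt \<delta>\<^sub>0)))"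
    using diff unfolding real_differentiable_def by blast
  have "sgn l' = 0" "sgn r' = - sgn l'"
    using ample_bank_response_sgn[where \<delta> = "\<lambda>\<delta>. \<delta>" and I = "\<lambda>_. i" and IR = "\<lambda>_. ir",
        OF ev i rt lt DERIV_const DERIV_const] by simp_all
  then have "l' = 0" "r' = 0"
    by (simp_all add: sgn_0_0)
  have "(n has_real_derivative - s\<^sub>3 / ((1 + (ir - g' (rt \<delta>\<^sub>0))) * rt \<delta>\<^sub>0 + lt \<delta>\<^sub>0)) (at \<delta>\<^sub>0)"
    using DERIV_ample_nbanks[where ir = "\<lambda>_. ir", OF Ld rt lt DERIV_ident DERIV_const pos(1,2)] pos(4)
    unfolding n_def \<open>l' = 0\<close> \<open>r' = 0\<close> by (simp add: power2_eq_square)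
  then show ?thesis
    using money_multiplier_deriv_neg_of_scale[of n _ \<delta>\<^sub>0 rt lt m] rt lt pos m s\<^sub>3
    unfolding \<open>l' = 0\<close> \<open>r' = 0\<close> n_def by (simp add: divide_neg_pos)
qed

lemma scarce_eq_pos:
  assumes eq: "scarce_eq g g' e e' k \<chi> i ir rt idr il" and "0 \<le> i" "0 < \<chi>" "\<chi> < 1"
  shows "0 < rt" "0 < acoef \<chi> * rt" "0 < il" "0 < 1 + idr"
proof -
  show rt: "0 < rt"
    using eq unfolding scarce_eq_def by simp
  then show art: "0 < acoef \<chi> * rt"
    using assms(3,4) unfolding acoef_def by simp
  then show il: "0 < il"
    using eq e_derivs_pos[OF art] unfolding scarce_eq_def by linarith
  have "0 < (1 + idr) * (1 + il)"
    using eq assms(2) unfolding scarce_eq_def by linarith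
  then show "0 < 1 + idr"
    using il by (simp add: zero_less_mult_iff)
qed

lemma scarce_bank_stationary:
  assumes ev: "eventually (\<lambda>y. scarce_eq g g' e e' k \<chi> i ir (rt y) (idr y) (il y)) (nhds x)"
    and i: "0 \<le> i" and \<chi>: "0 < \<chi>" "\<chi> < 1"
    and rt: "(rt has_real_derivative r') (at x)"
    and idr: "(idr has_real_derivative d') (at x)" and il: "(il has_real_derivative j') (at x)"
  shows "r' = 0" "d' = 0" "j' = 0"
proof -
  define a where "a = acoef \<chi>"
  have a: "0 < a"
    using \<chi> unfolding a_def acoef_def by simp
  note pos = scarce_eq_pos[OF eventually_nhds_x_imp_x[OF ev] i \<chi>, folded a_def]
  have "((\<lambda>y. g' (rt y) * rt y - g (rt y) + e' (a * rt y) * (a * rt y) - e (a * rt y)) has_real_derivative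
      r' * (g'' (rt x) * rt x + e'' (a * rt x) * a * a * rt x)) (at x)"
    using rt pos
    by (auto intro!: derivative_eq_intros DERIV_chain2[OF g'_deriv] DERIV_chain2[OF e'_deriv]
        DERIV_chain2[OF g_deriv] DERIV_chain2[OF e_deriv] simp: algebra_simps)
  moreover have "eventually (\<lambda>y. g' (rt y) * rt y - g (rt y) + e' (a * rt y) * (a * rt y) - e (a * rt y) = k)
      (nhds x)"
    using ev by (rule eventually_mono) (simp add: scarce_eq_def a_def)
  moreover have "0 < g'' (rt x) * rt x + e'' (a * rt x) * a * a * rt x"
    using pos a g_derivs_pos e_derivs_pos by (simp add: add_pos_pos)
  ultimately show r': "r' = 0"
    by (auto dest: DERIV_zero_if_eventually_const)
  have "((\<lambda>y. idr y - (ir - g' (rt y) + (il y - e' (a * rt y)) * a)) has_real_derivative d' - a * j') (at x)"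
    using rt idr il pos unfolding r'
    by (auto intro!: derivative_eq_intros DERIV_chain2[OF g'_deriv] DERIV_chain2[OF e'_deriv]
        simp: algebra_simps)
  moreover have "eventually (\<lambda>y. idr y - (ir - g' (rt y) + (il y - e' (a * rt y)) * a) = 0) (nhds x)"
    using ev by (rule eventually_mono) (simp add: scarce_eq_def a_def)
  ultimately have "d' - a * j' = 0"
    by (rule DERIV_zero_if_eventually_const)
  then have d': "d' = a * j'"
    by simp
  have "((\<lambda>y. (1 + idr y) * (1 + il y)) has_real_derivative j' * (a * (1 + il x) + (1 + idr x))) (at x)"
    using idr il unfolding d' by (auto intro!: derivative_eq_intros simp: algebra_simps)
  moreover have "eventually (\<lambda>y. (1 + idr y) * (1 + il y) = 1 + i) (nhds x)"
    using ev by (rule eventually_mono) (simp add: scarce_eq_def)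
  moreover have "0 < a * (1 + il x) + (1 + idr x)"
    using pos a by (simp add: add_pos_pos)
  ultimately show "j' = 0"
    by (auto dest: DERIV_zero_if_eventually_const)
  then show "d' = 0"
    using d' by simp
qed

lemma scarce_multiplier_deriv_neg_credit_limit:
  fixes rt idr il Linv :: "real \<Rightarrow> real" and s\<^sub>2 s\<^sub>3 \<chi> :: real
  defines "r \<equiv> \<lambda>\<delta>. scarce_reserves Linv s\<^sub>2 s\<^sub>3 \<delta> \<chi> (idr \<delta>) (il \<delta>)"
  assumes U: "open U" "\<delta>\<^sub>0 \<in> U"
    and eq: "\<forall>\<delta>\<in>U. scarce_eq g g' e e' k \<chi> i ir (rt \<delta>) (idr \<delta>) (il \<delta>)"
    and diff: "rt differentiable (at \<delta>\<^sub>0)" "idr differentiable (at \<delta>\<^sub>0)" "il differentiable (at \<delta>\<^sub>0)"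
      "Linv differentiable (at (il \<delta>\<^sub>0))"
    and i: "0 \<le> i" and \<delta>\<^sub>0: "0 \<le> \<delta>\<^sub>0" "\<delta>\<^sub>0 < Linv (il \<delta>\<^sub>0)"
    and m: "0 < m" and s: "0 < s\<^sub>2" "0 < s\<^sub>3" and \<chi>: "0 < \<chi>" "\<chi> < 1"
  shows "\<exists>D. ((\<lambda>\<delta>. money_multiplier m (r \<delta>) (acoef \<chi> * r \<delta>)) has_real_derivative D) (at \<delta>\<^sub>0) \<and> D < 0"
proof -
  have ev: "eventually (\<lambda>\<delta>. scarce_eq g g' e e' k \<chi> i ir (rt \<delta>) (idr \<delta>) (il \<delta>)) (nhds \<delta>\<^sub>0)"
    unfolding eventually_nhds using U eq by blast
  note pos = scarce_eq_pos[OF eventually_nhds_x_imp_x[OF ev] i \<chi>]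
  obtain r' d' j' Ld where rt: "(rt has_real_derivative r') (at \<delta>\<^sub>0)"
    and idr: "(idr has_real_derivative d') (at \<delta>\<^sub>0)" and il: "(il has_real_derivative j') (at \<delta>\<^sub>0)"
    and Ld: "(Linv has_real_derivative Ld) (at (il \<delta>\<^sub>0))"
    using diff unfolding real_differentiable_def by blast
  note stationary = scarce_bank_stationary[OF ev i \<chi> rt idr il]
  have denom: "0 < 1 + idr \<delta>\<^sub>0 * \<chi>"
    using pos(4) \<chi> mult_pos_pos[of "1 + idr \<delta>\<^sub>0" \<chi>] by (simp add: algebra_simps)
  have r_deriv: "(r has_real_derivative - (s\<^sub>3 * \<chi>) / (1 + idr \<delta>\<^sub>0 * \<chi>)) (at \<delta>\<^sub>0)"
    unfolding r_def scarce_reserves_def using idr il Ld denom stationary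
    by (auto intro!: derivative_eq_intros DERIV_chain2[where f = Linv] simp: power2_eq_square)
  moreover have "0 < r \<delta>\<^sub>0"
  proof -
    have "r \<delta>\<^sub>0 = \<chi> * ((s\<^sub>2 + s\<^sub>3) * Linv (il \<delta>\<^sub>0) - s\<^sub>3 * \<delta>\<^sub>0) / (1 + idr \<delta>\<^sub>0 * \<chi>)"
      unfolding r_def scarce_reserves_def by (simp add: diff_divide_distrib algebra_simps)
    moreover have "s\<^sub>3 * \<delta>\<^sub>0 < (s\<^sub>2 + s\<^sub>3) * Linv (il \<delta>\<^sub>0)"
      using \<delta>\<^sub>0 s mult_strict_mono[of s\<^sub>3 "s\<^sub>2 + s\<^sub>3" \<delta>\<^sub>0 "Linv (il \<delta>\<^sub>0)"] by simp
    ultimately show ?thesis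
      using denom \<chi>(1) by simp
  qed
  moreover have "- (s\<^sub>3 * \<chi>) / (1 + idr \<delta>\<^sub>0 * \<chi>) < 0" "0 < acoef \<chi>"
    using denom s(2) \<chi> unfolding acoef_def by (simp_all add: divide_neg_pos)
  ultimately show ?thesis
    using money_multiplier_deriv_neg_of_scale[OF r_deriv _ DERIV_const DERIV_const m, of 1 "acoef \<chi>"]
    by (simp add: mult.commute)
qed

lemma ample_multiplier_small_cash_increasing_in_policy_rate:
  fixes rt lt :: "real \<Rightarrow> real \<Rightarrow> real" and Linv :: "real \<Rightarrow> real"
  assumes U: "open U" "(i\<^sub>0, ir\<^sub>0) \<in> U"
    and eq: "\<forall>i ir. (i, ir) \<in> U \<longrightarrow> ample_eq Linv s\<^sub>2 s\<^sub>3 \<delta> g g' e e' k \<chi> i ir (rt i ir) (lt i ir)"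
    and i\<^sub>0: "0 \<le> i\<^sub>0"
    and diff: "(\<lambda>i. rt i ir\<^sub>0) differentiable (at i\<^sub>0)" "(\<lambda>i. lt i ir\<^sub>0) differentiable (at i\<^sub>0)"
      "Linv differentiable (at i\<^sub>0)"
    and Linv_diff: "Linv differentiable (at (e' (lt i\<^sub>0 ir\<^sub>0)))"
    and Linv_dec: "\<forall>x y. 0 \<le> x \<longrightarrow> x < y \<longrightarrow> Linv y < Linv x"
    and "0 < s\<^sub>1"
  shows "\<exists>\<epsilon>>0. \<forall>m. 0 < m \<and> m < \<epsilon> \<longrightarrow>
    (\<exists>D. ((\<lambda>i. money_multiplier (m + (s\<^sub>1 * Linv i - s\<^sub>1 * Linv i\<^sub>0))
        (ample_nbanks Linv s\<^sub>2 s\<^sub>3 \<delta> g' e' ir\<^sub>0 (rt i ir\<^sub>0) (lt i ir\<^sub>0) * rt i ir\<^sub>0)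
        (ample_nbanks Linv s\<^sub>2 s\<^sub>3 \<delta> g' e' ir\<^sub>0 (rt i ir\<^sub>0) (lt i ir\<^sub>0) * lt i ir\<^sub>0))
      has_real_derivative D) (at i\<^sub>0) \<and> 0 < D)"
proof -
  have ev: "eventually (\<lambda>i. ample_eq Linv s\<^sub>2 s\<^sub>3 \<delta> g g' e e' k \<chi> i ir\<^sub>0 (rt i ir\<^sub>0) (lt i ir\<^sub>0)) (nhds i\<^sub>0)"
    using eventually_nhds_slices(1)[OF U] by (rule eventually_mono) (use eq in blast)
  obtain r' l' L' where rt: "((\<lambda>i. rt i ir\<^sub>0) has_real_derivative r') (at i\<^sub>0)"
    and lt: "((\<lambda>i. lt i ir\<^sub>0) has_real_derivative l') (at i\<^sub>0)" and L: "(Linv has_real_derivative L') (at i\<^sub>0)"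
    using diff unfolding real_differentiable_def by blast
  have "L' \<le> 0"
    using DERIV_nonpos_if_strict_antimono[OF Linv_dec i\<^sub>0 L] .
  then have "(s\<^sub>1 * L' - 0) * (1 - (1 + e' (lt i\<^sub>0 ir\<^sub>0)) * 0) \<le> 0"
    using \<open>0 < s\<^sub>1\<close> by (simp add: mult_nonneg_nonpos)
  from ample_multiplier_deriv_sgn_small_cash[OF ev i\<^sub>0 rt lt DERIV_ident DERIV_const
      DERIV_diff[OF DERIV_cmult[OF L] DERIV_const] _ Linv_diff _ this]
  show ?thesis
    by (simp add: sgn_1_pos)
qed

lemma ample_multiplier_small_cash_decreasing_in_reserve_rate:
  fixes rt lt :: "real \<Rightarrow> real \<Rightarrow> real" and Linv :: "real \<Rightarrow> real"
  assumes U: "open U" "(i\<^sub>0, ir\<^sub>0) \<in> U"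
    and eq: "\<forall>i ir. (i, ir) \<in> U \<longrightarrow> ample_eq Linv s\<^sub>2 s\<^sub>3 \<delta> g g' e e' k \<chi> i ir (rt i ir) (lt i ir)"
    and i\<^sub>0: "0 \<le> i\<^sub>0"
    and diff: "(\<lambda>ir. rt i\<^sub>0 ir) differentiable (at ir\<^sub>0)" "(\<lambda>ir. lt i\<^sub>0 ir) differentiable (at ir\<^sub>0)"
    and Linv_diff: "Linv differentiable (at (e' (lt i\<^sub>0 ir\<^sub>0)))"
  shows "\<exists>\<epsilon>>0. \<forall>m. 0 < m \<and> m < \<epsilon> \<longrightarrow>
    (\<exists>D. ((\<lambda>ir. money_multiplier m
        (ample_nbanks Linv s\<^sub>2 s\<^sub>3 \<delta> g' e' ir (rt i\<^sub>0 ir) (lt i\<^sub>0 ir) * rt i\<^sub>0 ir)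
        (ample_nbanks Linv s\<^sub>2 s\<^sub>3 \<delta> g' e' ir (rt i\<^sub>0 ir) (lt i\<^sub>0 ir) * lt i\<^sub>0 ir))
      has_real_derivative D) (at ir\<^sub>0) \<and> D < 0)"
proof -
  have ev: "eventually (\<lambda>ir. ample_eq Linv s\<^sub>2 s\<^sub>3 \<delta> g g' e e' k \<chi> i\<^sub>0 ir (rt i\<^sub>0 ir) (lt i\<^sub>0 ir)) (nhds ir\<^sub>0)"
    using eventually_nhds_slices(2)[OF U] by (rule eventually_mono) (use eq in blast)
  obtain r' l' where rt: "((\<lambda>ir. rt i\<^sub>0 ir) has_real_derivative r') (at ir\<^sub>0)"
    and lt: "((\<lambda>ir. lt i\<^sub>0 ir) has_real_derivative l') (at ir\<^sub>0)"
    using diff unfolding real_differentiable_def by blast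
  have "0 < e' (lt i\<^sub>0 ir\<^sub>0)"
    using e_derivs_pos ample_eq_pos(2)[OF eventually_nhds_x_imp_x[OF ev] i\<^sub>0] by simp
  then have Q: "0 - (1 + e' (lt i\<^sub>0 ir\<^sub>0)) * 1 \<noteq> 0" "sgn (0 - (1 + e' (lt i\<^sub>0 ir\<^sub>0)) * 1) = - 1"
    by simp_all
  from ample_multiplier_deriv_sgn_small_cash[where M = "\<lambda>_. 0", OF ev i\<^sub>0 rt lt DERIV_const DERIV_ident
      DERIV_const _ Linv_diff Q(1)]
  show ?thesis
    unfolding Q(2) sgn_1_neg by simp
qed

end

theorem proposition6:
  fixes \<sigma>\<^sub>1 \<sigma>\<^sub>2 \<sigma>\<^sub>3 k \<chi> :: real
    and Linv g g' g'' e e' e'' :: "real \<Rightarrow> real"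
  assumes sig: "0 < \<sigma>\<^sub>1" "0 < \<sigma>\<^sub>2" "0 < \<sigma>\<^sub>3" "\<sigma>\<^sub>1 + \<sigma>\<^sub>2 + \<sigma>\<^sub>3 = 1"
    and chi: "0 < \<chi>" "\<chi> < 1"
    and kpos: "0 < k"
    and Linv_dec: "\<forall>x y. 0 \<le> x \<longrightarrow> x < y \<longrightarrow> Linv y < Linv x"
    and g_der: "\<forall>x\<ge>0. (g has_real_derivative g' x) (at x within {0..})"
    and g'_der: "\<forall>x\<ge>0. (g' has_real_derivative g'' x) (at x within {0..})"
    and g_pos: "\<forall>x>0. 0 < g' x \<and> 0 < g'' x"
    and g0: "g 0 = 0" "g' 0 = 0"
    and e_der: "\<forall>x\<ge>0. (e has_real_derivative e' x) (at x within {0..})"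
    and e'_der: "\<forall>x\<ge>0. (e' has_real_derivative e'' x) (at x within {0..})"
    and e_pos: "\<forall>x>0. 0 < e' x \<and> 0 < e'' x"
    and e0: "e 0 = 0" "e' 0 = 0"
  shows
    \<comment> \<open>(i) ample reserves: small m, derivatives in i and in i_r\<close>
    "(\<forall>(\<delta>::real) (rt::real \<Rightarrow> real \<Rightarrow> real) (lt::real \<Rightarrow> real \<Rightarrow> real) (U::(real \<times> real) set) i0 ir0.
        0 \<le> \<delta> \<and> open U \<and> (i0, ir0) \<in> U \<and> 0 \<le> i0 \<and>
        (\<forall>i ir. (i, ir) \<in> U \<longrightarrow>
           ample_eq Linv \<sigma>\<^sub>2 \<sigma>\<^sub>3 \<delta> g g' e e' k \<chi> i ir (rt i ir) (lt i ir)) \<and>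
        (\<lambda>i. rt i ir0) differentiable (at i0) \<and> (\<lambda>i. lt i ir0) differentiable (at i0) \<and>
        (\<lambda>ir. rt i0 ir) differentiable (at ir0) \<and> (\<lambda>ir. lt i0 ir) differentiable (at ir0) \<and>
        Linv differentiable (at i0) \<and> Linv differentiable (at (e' (lt i0 ir0)))
      \<longrightarrow>
        (let n = (\<lambda>i ir. ample_nbanks Linv \<sigma>\<^sub>2 \<sigma>\<^sub>3 \<delta> g' e' ir (rt i ir) (lt i ir));
             m = (\<lambda>i. \<sigma>\<^sub>1 * Linv i)
         in (\<exists>\<epsilon>>0. \<forall>m0. 0 < m0 \<and> m0 < \<epsilon> \<longrightarrow>
               (\<exists>D. ((\<lambda>i. money_multiplier (m0 + (m i - m i0))
                          (n i ir0 * rt i ir0) (n i ir0 * lt i ir0))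
                      has_real_derivative D) (at i0) \<and> 0 < D)) \<and>
            (\<exists>\<epsilon>>0. \<forall>m0. 0 < m0 \<and> m0 < \<epsilon> \<longrightarrow>
               (\<exists>D. ((\<lambda>ir. money_multiplier m0
                          (n i0 ir * rt i0 ir) (n i0 ir * lt i0 ir))
                      has_real_derivative D) (at ir0) \<and> D < 0))))
     \<and>
    \<comment> \<open>(ii) ample reserves: derivative in the credit limit\<close>
    (\<forall>(rt::real \<Rightarrow> real) (lt::real \<Rightarrow> real) (U::real set) \<delta>0 i ir.
        open U \<and> \<delta>0 \<in> U \<and> 0 \<le> \<delta>0 \<and> 0 \<le> i \<and>
        (\<forall>\<delta>\<in>U. ample_eq Linv \<sigma>\<^sub>2 \<sigma>\<^sub>3 \<delta> g g' e e' k \<chi> i ir (rt \<delta>) (lt \<delta>)) \<and>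
        rt differentiable (at \<delta>0) \<and> lt differentiable (at \<delta>0) \<and>
        Linv differentiable (at (e' (lt \<delta>0))) \<and>
        \<delta>0 < Linv (e' (lt \<delta>0)) \<and> 0 < \<sigma>\<^sub>1 * Linv i \<and> \<chi> < 1
      \<longrightarrow>
        (let n = (\<lambda>\<delta>. ample_nbanks Linv \<sigma>\<^sub>2 \<sigma>\<^sub>3 \<delta> g' e' ir (rt \<delta>) (lt \<delta>))
         in \<exists>D. ((\<lambda>\<delta>. money_multiplier (\<sigma>\<^sub>1 * Linv i) (n \<delta> * rt \<delta>) (n \<delta> * lt \<delta>))
                   has_real_derivative D) (at \<delta>0) \<and> D < 0))
     \<and>
    \<comment> \<open>(ii) scarce reserves: derivative in the credit limit\<close>
    (\<forall>(rt::real \<Rightarrow> real) (idr::real \<Rightarrow> real) (il::real \<Rightarrow> real) (U::real set) \<delta>0 i ir.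
        open U \<and> \<delta>0 \<in> U \<and> 0 \<le> \<delta>0 \<and> 0 \<le> i \<and>
        (\<forall>\<delta>\<in>U. scarce_eq g g' e e' k \<chi> i ir (rt \<delta>) (idr \<delta>) (il \<delta>)) \<and>
        rt differentiable (at \<delta>0) \<and> idr differentiable (at \<delta>0) \<and> il differentiable (at \<delta>0) \<and>
        Linv differentiable (at (il \<delta>0)) \<and>
        \<delta>0 < Linv (il \<delta>0) \<and> 0 < \<sigma>\<^sub>1 * Linv i \<and> \<chi> < 1
      \<longrightarrow>
        (let r = (\<lambda>\<delta>. scarce_reserves Linv \<sigma>\<^sub>2 \<sigma>\<^sub>3 \<delta> \<chi> (idr \<delta>) (il \<delta>))
         in \<exists>D. ((\<lambda>\<delta>. money_multiplier (\<sigma>\<^sub>1 * Linv i) (r \<delta>) (acoef \<chi> * r \<delta>))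
                   has_real_derivative D) (at \<delta>0) \<and> D < 0))"
proof -
  interpret bank_costs g g' g'' e e' e''
    using g_der g'_der e_der e'_der g_pos e_pos
    by unfold_locales (auto intro: DERIV_at_if_DERIV_within_nonneg)
  show ?thesis
    unfolding Let_def
    apply (intro conjI allI impI; elim conjE)
    subgoal
      by (rule ample_multiplier_small_cash_increasing_in_policy_rate) (use sig Linv_dec in simp_all)
    subgoal
      by (rule ample_multiplier_small_cash_decreasing_in_reserve_rate) simp_all
    subgoal
      by (rule ample_multiplier_deriv_neg_credit_limit) (use sig in simp_all)
    subgoal
      by (rule scarce_multiplier_deriv_neg_credit_limit; assumption?) (use sig chi in simp_all)
    done
qed

end
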